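(* Let $\sigma$ be a filling of $\mathrm{dg}(\lambda)$, and let $i,r$ be such that the cells $(i,r),(i+1,r)$ lie in $\mathrm{dg}(\lambda)$, $\sigma(i,r)\ne\sigma(i+1,r)$, and $\sigma(i,s)=\sigma(i+1,s)$ for all $1\le s\le r-1$. Let $T$ be the triple formed by the cells $(i+1,r),(i,r),(i,r-1)$ (where $(i,0)$ is the basement cell with entry $\infty$). Then \[ \mathrm{inv}(\mathcal{T}_i^{(r)}(\sigma))=\begin{cases}\mathrm{inv}(\sigma)-1,& T\text{ counterclockwise in }\sigma,\\ \mathrm{inv}(\sigma)+1,&\text{otherwise.}\end{cases} \]
   Context: Diagrams and fillings: for a partition $\lambda=(\lambda_1\ge\dots\ge\lambda_n>0)$, $\mathrm{dg}(\lambda)$ is the set of cells $(i,r)$ with $1\le i\le n$, $1\le r\le\lambda_i$ (column $i$ from the left has $\lambda_i$ cells; rows counted from the bottom). A filling is a map $\sigma:\mathrm{dg}(\lambda)\to\mathbb{Z}_{>0}$. A basement row $0$ is adjoined with $\sigma(i,0)=\infty$. For $u<v$, $r\ge1$, $(v,r),(u,r)\in\mathrm{dg}(\lambda)$, the cells $(v,r),(u,r),(u,r-1)$ form a triple; with $a=\sigma(v,r),b=\sigma(u,r),c=\sigma(u,r-1)$ it is counterclockwise (an inversion triple) if $a<b\le c$ or $c<a<b$ or $b\le c<a$, and clockwise otherwise. $\mathrm{inv}(\sigma)$ is the number of inversion triples (including those with $r=1$). Operator $\mathcal{T}_i^{(r)}$ (defined when columns $i,i+1$ agree in rows $1,\dots,r-1$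 and differ in row $r$): (1) swap the entries of cells $(i,r)$ and $(i+1,r)$; (2) if the cells $(i+1,r+1),(i,r+1)$ do not both exist, stop; otherwise consider the triple $(i+1,r+1),(i,r+1),(i,r)$: if it was counterclockwise both before and after the last swap, or clockwise both before and after, stop; otherwise swap the entries of $(i,r+1)$ and $(i+1,r+1)$, replace $r$ by $r+1$ and repeat step (2). *)

theory Defs
  imports Main "HOL-Library.Extended_Nat"
begin

text \<open>A partition is a list lam = [lam_1,...,lam_n] of positive, weakly decreasing
  naturals. Column i (1-based) has lam_i cells; rows counted from 1 at the bottom.\<close>

definition is_partition :: "nat list \<Rightarrow> bool" where
  "is_partition lam \<longleftrightarrow> sorted_wrt (\<ge>) lam \<and> (\<forall>x\<in>set lam. 0 < x)"

definition dg :: "nat list \<Rightarrow> (nat \<times> nat) set" where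
  "dg lam = {(i, r). 1 \<le> i \<and> i \<le> length lam \<and> 1 \<le> r \<and> r \<le> lam ! (i - 1)}"

text \<open>A filling is a map sigma from cells to positive naturals (values outside
  the diagram are irrelevant). The basement row 0 carries the value infinity.\<close>

definition is_filling :: "nat list \<Rightarrow> (nat \<times> nat \<Rightarrow> nat) \<Rightarrow> bool" where
  "is_filling lam \<sigma> \<longleftrightarrow> (\<forall>c\<in>dg lam. 0 < \<sigma> c)"

definition val :: "(nat \<times> nat \<Rightarrow> nat) \<Rightarrow> nat \<times> nat \<Rightarrow> enat" where
  "val \<sigma> c = (if snd c = 0 then \<infinity> else enat (\<sigma> c))"

text \<open>Triple with entries a = sigma(v,r), b = sigma(u,r), c = sigma(u,r-1) is
  counterclockwise (an inversion triple).\<close>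

definition ccw :: "enat \<Rightarrow> enat \<Rightarrow> enat \<Rightarrow> bool" where
  "ccw a b c \<longleftrightarrow> (a < b \<and> b \<le> c) \<or> (c < a \<and> a < b) \<or> (b \<le> c \<and> c < a)"

definition inv_triples :: "nat list \<Rightarrow> (nat \<times> nat \<Rightarrow> nat) \<Rightarrow> (nat \<times> nat \<times> nat) set" where
  "inv_triples lam \<sigma> = {(u, v, r). u < v \<and> 1 \<le> r \<and> (v, r) \<in> dg lam \<and> (u, r) \<in> dg lam \<and>
       ccw (val \<sigma> (v, r)) (val \<sigma> (u, r)) (val \<sigma> (u, r - 1))}"

definition inv :: "nat list \<Rightarrow> (nat \<times> nat \<Rightarrow> nat) \<Rightarrow> nat" where
  "inv lam \<sigma> = card (inv_triples lam \<sigma>)"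

definition swap_cells :: "(nat \<times> nat \<Rightarrow> nat) \<Rightarrow> nat \<Rightarrow> nat \<Rightarrow> (nat \<times> nat \<Rightarrow> nat)" where
  "swap_cells \<sigma> i r = \<sigma>((i, r) := \<sigma> (i + 1, r), (i + 1, r) := \<sigma> (i, r))"

text \<open>Step (2) of the operator: sb is the filling before the last swap (performed in
  row r), sa the filling after it.\<close>

function T_loop :: "nat list \<Rightarrow> nat \<Rightarrow> (nat \<times> nat \<Rightarrow> nat) \<Rightarrow> (nat \<times> nat \<Rightarrow> nat) \<Rightarrow> nat
                     \<Rightarrow> (nat \<times> nat \<Rightarrow> nat)" where
  "T_loop lam i sb sa r =
     (if (i + 1, r + 1) \<notin> dg lam \<or> (i, r + 1) \<notin> dg lam then sa
      else if ccw (val sb (i + 1, r + 1)) (val sb (i, r + 1)) (val sb (i, r)) =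
              ccw (val sa (i + 1, r + 1)) (val sa (i, r + 1)) (val sa (i, r))
      then sa
      else T_loop lam i sa (swap_cells sa i (r + 1)) (r + 1))"
  by pat_completeness auto
termination
  by (relation "measure (\<lambda>(lam, i, sb, sa, r). lam ! (i - 1) - r)") (auto simp: dg_def)

definition T_op :: "nat list \<Rightarrow> nat \<Rightarrow> nat \<Rightarrow> (nat \<times> nat \<Rightarrow> nat) \<Rightarrow> (nat \<times> nat \<Rightarrow> nat)" where
  "T_op lam i r \<sigma> = T_loop lam i \<sigma> (swap_cells \<sigma> i r) r"

end

theory Submission
  imports Defs "HOL-Combinatorics.Transposition"
begin

text \<open>The operator exchanges the entries of columns i and i + 1 in a block of
  rows r, ..., k, where the triple above every row r, ..., k - 1 changes orientation
  when its lower cell is exchanged and the one above row k does not. Pair every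
  triple position with the position obtained by exchanging the column indices
  i and i + 1. Within each pair the number of inversion triples is unchanged:
  below row r the two columns agree, in rows r + 1, ..., k the flipping of the
  triples in columns i, i + 1 compensates the exchange, and in row k + 1 the
  stopping condition says that the two possible lower entries lie on the same side
  of the interval spanned by the upper ones, which is all that matters for the
  triples with a third column to the right. The one exception is the triple in
  columns i, i + 1 of row r, whose two upper entries are exchanged over a fixed
  lower one; it changes orientation. The positivity of the entries is never used.\<close>

lemma ccw_of_less: "a < b \<Longrightarrow> ccw a b c \<longleftrightarrow> \<not> (a \<le> c \<and> c < b)"
  unfolding ccw_def by auto

lemma ccw_of_greater: "b < a \<Longrightarrow> ccw a b c \<longleftrightarrow> b \<le> c \<and> c < a"
  unfolding ccw_def by auto

lemma ccw_swap: "a \<noteq> b \<Longrightarrow> ccw b a c \<longleftrightarrow> \<not> ccw a b c"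
  by (cases a b rule: linorder_cases) (simp_all add: ccw_of_less ccw_of_greater)

lemma ccw_swap_if_last_changes: "ccw a b c \<noteq> ccw a b d \<Longrightarrow> ccw b a d = ccw a b c"
  by (cases a b rule: linorder_cases) (auto simp: ccw_of_less ccw_of_greater ccw_def)

lemma ccw_difference:
  assumes "a < b"
  shows "of_bool (ccw x b y) - of_bool (ccw x a y) = (of_bool (a \<le> x \<and> x < b) - of_bool (a \<le> y \<and> y < b) :: int)"
  using assms unfolding ccw_def
  by (cases x a rule: linorder_cases; cases x b rule: linorder_cases; cases y x rule: linorder_cases) auto

lemma ccw_exchange:
  assumes "ccw a b c = ccw a b d"
  shows "of_bool (ccw x b d) + of_bool (ccw x a c) = (of_bool (ccw x b c) + of_bool (ccw x a d) :: int)"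
proof (cases a b rule: linorder_cases)
  case less
  then have "of_bool (a \<le> c \<and> c < b) = (of_bool (a \<le> d \<and> d < b) :: int)"
    using assms by (auto simp: ccw_of_less)
  then show ?thesis
    using ccw_difference[OF less, of x c] ccw_difference[OF less, of x d] by linarith
next
  case greater
  then have "of_bool (b \<le> c \<and> c < a) = (of_bool (b \<le> d \<and> d < a) :: int)"
    using assms by (auto simp: ccw_of_greater)
  then show ?thesis
    using ccw_difference[OF greater, of x c] ccw_difference[OF greater, of x d] by linarith
qed simp

declare T_loop.simps [simp del]

fun swap_cols :: "nat \<Rightarrow> nat \<Rightarrow> nat \<Rightarrow> nat \<times> nat \<Rightarrow> nat \<times> nat" where
  "swap_cols i r k (a, s) = (if r \<le> s \<and> s \<le> k then transpose i (i + 1) a else a, s)"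

lemma val_comp_swap_cols: "val (\<sigma> \<circ> swap_cols i r k) c = val \<sigma> (swap_cols i r k c)"
  by (cases c) (simp add: val_def)

definition triple_flips :: "(nat \<times> nat \<Rightarrow> nat) \<Rightarrow> nat \<Rightarrow> nat \<Rightarrow> bool" where
  "triple_flips \<sigma> i s \<longleftrightarrow>
     ccw (val \<sigma> (i + 1, s)) (val \<sigma> (i, s)) (val \<sigma> (i, s - 1)) \<noteq>
     ccw (val \<sigma> (i + 1, s)) (val \<sigma> (i, s)) (val \<sigma> (i + 1, s - 1))"

text \<open>Rows r, ..., k are exactly the rows whose entries step (2) exchanges:
  the triple above each swapped row r, ..., k - 1 changes orientation, the one
  above row k does not (or does not exist).\<close>

definition flip_run :: "nat list \<Rightarrow> (nat \<times> nat \<Rightarrow> nat) \<Rightarrow> nat \<Rightarrow> nat \<Rightarrow> nat \<Rightarrow> bool" where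
  "flip_run lam \<sigma> i r k \<longleftrightarrow> r \<le> k \<and> (i + 1, k) \<in> dg lam \<and>
     (\<forall>s. r < s \<and> s \<le> k \<longrightarrow> triple_flips \<sigma> i s) \<and>
     ((i + 1, k + 1) \<in> dg lam \<longrightarrow> (i, k + 1) \<in> dg lam \<longrightarrow> \<not> triple_flips \<sigma> i (k + 1))"

lemma T_loop_swap_cols:
  assumes "1 \<le> r" "r \<le> m" "(i + 1, m) \<in> dg lam" "\<forall>s. r < s \<and> s \<le> m \<longrightarrow> triple_flips \<sigma> i s"
  shows "\<exists>k. flip_run lam \<sigma> i r k \<and>
    T_loop lam i (\<sigma> \<circ> swap_cols i r (m - 1)) (\<sigma> \<circ> swap_cols i r m) m = \<sigma> \<circ> swap_cols i r k"
  using assms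
proof (induction "lam ! i - m" arbitrary: m rule: less_induct)
  case less
  let ?sb = "\<sigma> \<circ> swap_cols i r (m - 1)" and ?sa = "\<sigma> \<circ> swap_cols i r m"
  note unfold_loop = T_loop.simps[of lam i ?sb ?sa m]
  show ?case
  proof (cases "(i + 1, m + 1) \<in> dg lam \<and> (i, m + 1) \<in> dg lam")
    case False
    then show ?thesis
      unfolding unfold_loop using less.prems by (intro exI[of _ m]) (auto simp: flip_run_def)
  next
    case True
    have same_orientation: "ccw (val ?sb (i + 1, m + 1)) (val ?sb (i, m + 1)) (val ?sb (i, m)) =
        ccw (val ?sa (i + 1, m + 1)) (val ?sa (i, m + 1)) (val ?sa (i, m)) \<longleftrightarrow> \<not> triple_flips \<sigma> i (m + 1)"
      using less.prems(1,2) by (auto simp: val_comp_swap_cols triple_flips_def)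
    have "swap_cells ?sa i (m + 1) = \<sigma> \<circ> swap_cols i r (m + 1)"
      using less.prems(2) by (auto simp: swap_cells_def fun_eq_iff)
    with True same_orientation have step: "T_loop lam i ?sb ?sa m =
        (if triple_flips \<sigma> i (m + 1) then T_loop lam i ?sa (\<sigma> \<circ> swap_cols i r (m + 1)) (m + 1) else ?sa)"
      unfolding unfold_loop by simp
    show ?thesis
    proof (cases "triple_flips \<sigma> i (m + 1)")
      case False
      then show ?thesis
        unfolding step using less.prems True by (intro exI[of _ m]) (auto simp: flip_run_def)
    next
      case flips: True
      have "lam ! i - (m + 1) < lam ! i - m"
        using True by (auto simp: dg_def)
      moreover have "\<forall>s. r < s \<and> s \<le> m + 1 \<longrightarrow> triple_flips \<sigma> i s"
        using less.prems(4) flips le_Suc_eq by auto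
      ultimately show ?thesis
        unfolding step using less.hyps[of "m + 1"] less.prems True flips by auto
    qed
  qed
qed

lemma T_op_swap_cols:
  assumes "1 \<le> r" "(i + 1, r) \<in> dg lam"
  shows "\<exists>k. flip_run lam \<sigma> i r k \<and> T_op lam i r \<sigma> = \<sigma> \<circ> swap_cols i r k"
proof -
  have "\<sigma> \<circ> swap_cols i r (r - 1) = \<sigma>" "\<sigma> \<circ> swap_cols i r r = swap_cells \<sigma> i r"
    using assms(1) by (auto simp: swap_cells_def fun_eq_iff)
  moreover obtain k where "flip_run lam \<sigma> i r k"
    "T_loop lam i (\<sigma> \<circ> swap_cols i r (r - 1)) (\<sigma> \<circ> swap_cols i r r) r = \<sigma> \<circ> swap_cols i r k"
    using T_loop_swap_cols[OF assms(1) order.refl assms(2), of \<sigma>] by fastforce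
  ultimately show ?thesis
    unfolding T_op_def by auto
qed

definition triple_positions :: "nat list \<Rightarrow> (nat \<times> nat \<times> nat) set" where
  "triple_positions lam = {(u, v, s). u < v \<and> 1 \<le> s \<and> (v, s) \<in> dg lam \<and> (u, s) \<in> dg lam}"

fun ccw_at :: "(nat \<times> nat \<Rightarrow> nat) \<Rightarrow> nat \<times> nat \<times> nat \<Rightarrow> bool" where
  "ccw_at \<sigma> (u, v, s) \<longleftrightarrow> ccw (val \<sigma> (v, s)) (val \<sigma> (u, s)) (val \<sigma> (u, s - 1))"

lemma finite_triple_positions: "finite (triple_positions lam)"
proof (rule finite_subset)
  show "triple_positions lam \<subseteq> {..length lam} \<times> {..length lam} \<times> {..sum_list lam}"
    by (auto simp: triple_positions_def dg_def intro!: order.trans[OF _ elem_le_sum_list])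
qed simp

lemma inv_eq_sum: "int (inv lam \<sigma>) = (\<Sum>p\<in>triple_positions lam. of_bool (ccw_at \<sigma> p))"
proof -
  have "inv_triples lam \<sigma> = triple_positions lam \<inter> {p. ccw_at \<sigma> p}"
    by (auto simp: inv_triples_def triple_positions_def)
  then show ?thesis
    by (simp add: inv_def finite_triple_positions)
qed

lemma sum_eq_by_involution:
  fixes f g :: "'a \<Rightarrow> int"
  assumes "finite A" "bij_betw \<phi> A A" "p\<^sub>0 \<in> A" "\<phi> p\<^sub>0 = p\<^sub>0"
    and "\<And>p. p \<in> A \<Longrightarrow> p \<noteq> p\<^sub>0 \<Longrightarrow> g p + g (\<phi> p) = f p + f (\<phi> p)"
  shows "sum g A = sum f A + (g p\<^sub>0 - f p\<^sub>0)"
proof -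
  have "2 * sum g A - 2 * sum f A = (\<Sum>p\<in>A. g p + g (\<phi> p) - (f p + f (\<phi> p)))"
    using sum.reindex_bij_betw[OF assms(2), of g] sum.reindex_bij_betw[OF assms(2), of f]
    by (simp add: sum_subtractf sum.distrib)
  also have "\<dots> = (\<Sum>p\<in>A. if p = p\<^sub>0 then 2 * (g p\<^sub>0 - f p\<^sub>0) else 0)"
    using assms(4,5) by (intro sum.cong) auto
  also have "\<dots> = 2 * (g p\<^sub>0 - f p\<^sub>0)"
    using assms(1,3) by simp
  finally show ?thesis by presburger
qed

lemma dg_col_mono:
  assumes "is_partition lam" "(b, s) \<in> dg lam" "1 \<le> a" "a \<le> b"
  shows "(a, s) \<in> dg lam"
proof -
  have "lam ! (b - 1) \<le> lam ! (a - 1)"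
    using assms sorted_wrt_nth_less[of "(\<ge>)" lam "a - 1" "b - 1"]
    by (cases "a = b") (auto simp: is_partition_def dg_def)
  then show ?thesis
    using assms(2-4) by (auto simp: dg_def)
qed

lemma dg_row_mono: "(a, s) \<in> dg lam \<Longrightarrow> 1 \<le> t \<Longrightarrow> t \<le> s \<Longrightarrow> (a, t) \<in> dg lam"
  by (auto simp: dg_def)

text \<open>Exchanging the column indices i and i + 1 pairs up the triple positions,
  except those lying in columns i and i + 1 themselves and those whose partner
  would leave the diagram; these are fixed.\<close>

fun column_partner :: "nat list \<Rightarrow> nat \<Rightarrow> nat \<times> nat \<times> nat \<Rightarrow> nat \<times> nat \<times> nat" where
  "column_partner lam i (u, v, s) =
     (if (transpose i (i + 1) u, transpose i (i + 1) v, s) \<in> triple_positions lam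
      then (transpose i (i + 1) u, transpose i (i + 1) v, s) else (u, v, s))"

lemma column_partner_involution:
  "p \<in> triple_positions lam \<Longrightarrow> column_partner lam i (column_partner lam i p) = p"
  by (cases p) auto

lemma bij_betw_column_partner: "bij_betw (column_partner lam i) (triple_positions lam) (triple_positions lam)"
proof (rule bij_betw_byWitness[where f' = "column_partner lam i"])
  show "column_partner lam i ` triple_positions lam \<subseteq> triple_positions lam"
    by (auto split: if_splits)
qed (auto simp: column_partner_involution)

lemma ccw_at_swap_cols_fixed:
  assumes "u \<noteq> i" "u \<noteq> i + 1" "v \<noteq> i \<and> v \<noteq> i + 1 \<or> s < r \<or> k < s"
  shows "ccw_at (\<sigma> \<circ> swap_cols i r k) (u, v, s) = ccw_at \<sigma> (u, v, s)"
  using assms by (auto simp: val_comp_swap_cols)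

lemma ccw_at_swap_cols_left_pair:
  assumes "w < i"
  shows "of_bool (ccw_at (\<sigma> \<circ> swap_cols i r k) (w, i, s)) + of_bool (ccw_at (\<sigma> \<circ> swap_cols i r k) (w, i + 1, s))
       = (of_bool (ccw_at \<sigma> (w, i, s)) + of_bool (ccw_at \<sigma> (w, i + 1, s)) :: int)"
  using assms by (auto simp: val_comp_swap_cols)

context
  fixes lam :: "nat list" and \<sigma> :: "nat \<times> nat \<Rightarrow> nat" and i r k :: nat
  assumes run: "flip_run lam \<sigma> i r k"
    and equal_below: "\<forall>s<r. val \<sigma> (i, s) = val \<sigma> (i + 1, s)"
begin

lemma ccw_at_swap_cols_columns:
  assumes "s \<noteq> r" "(i, s) \<in> dg lam" "(i + 1, s) \<in> dg lam"
  shows "ccw_at (\<sigma> \<circ> swap_cols i r k) (i, i + 1, s) = ccw_at \<sigma> (i, i + 1, s)"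
proof -
  consider "s < r \<or> k + 1 < s" | "r < s \<and> s \<le> k" | "s = k + 1"
    using assms(1) by linarith
  then show ?thesis
  proof cases
    case 2
    then have "triple_flips \<sigma> i s"
      using run by (simp add: flip_run_def)
    then have "ccw (val \<sigma> (i, s)) (val \<sigma> (i + 1, s)) (val \<sigma> (i + 1, s - 1)) =
        ccw (val \<sigma> (i + 1, s)) (val \<sigma> (i, s)) (val \<sigma> (i, s - 1))"
      unfolding triple_flips_def by (rule ccw_swap_if_last_changes)
    moreover have "r \<le> s - 1" "s - 1 \<le> k"
      using 2 by auto
    ultimately show ?thesis
      using 2 by (simp add: val_comp_swap_cols)
  next
    case 3
    then have "\<not> triple_flips \<sigma> i s"
      using run assms(2,3) by (simp add: flip_run_def)
    with 3 run show ?thesis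
      by (auto simp: val_comp_swap_cols triple_flips_def flip_run_def)
  qed (auto simp: val_comp_swap_cols)
qed

lemma ccw_at_swap_cols_right_pair:
  assumes "i + 1 < w" "(i, s) \<in> dg lam" "(i + 1, s) \<in> dg lam"
  shows "of_bool (ccw_at (\<sigma> \<circ> swap_cols i r k) (i, w, s)) + of_bool (ccw_at (\<sigma> \<circ> swap_cols i r k) (i + 1, w, s))
       = (of_bool (ccw_at \<sigma> (i, w, s)) + of_bool (ccw_at \<sigma> (i + 1, w, s)) :: int)"
proof -
  consider "s < r \<or> k + 1 < s" | "s = r" | "r < s \<and> s \<le> k" | "s = k + 1"
    by linarith
  then show ?thesis
  proof cases
    case 2
    then have "val \<sigma> (i, s - 1) = val \<sigma> (i + 1, s - 1)"
      using equal_below assms(2) by (auto simp: dg_def)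
    with 2 run assms(1) show ?thesis
      by (auto simp: val_comp_swap_cols flip_run_def)
  next
    case 4
    then have "\<not> triple_flips \<sigma> i s"
      using run assms(2,3) by (simp add: flip_run_def)
    with 4 assms(1) show ?thesis
      using ccw_exchange[of "val \<sigma> (i + 1, s)" "val \<sigma> (i, s)" "val \<sigma> (i, k)" "val \<sigma> (i + 1, k)" "val \<sigma> (w, s)"]
      by (auto simp: val_comp_swap_cols triple_flips_def)
  qed (use assms(1) in \<open>auto simp: val_comp_swap_cols\<close>)
qed

lemma ccw_at_swap_cols_partner:
  assumes part: "is_partition lam" and "1 \<le> i"
    and p: "p \<in> triple_positions lam" "p \<noteq> (i, i + 1, r)"
  shows "of_bool (ccw_at (\<sigma> \<circ> swap_cols i r k) p) + of_bool (ccw_at (\<sigma> \<circ> swap_cols i r k) (column_partner lam i p))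
       = (of_bool (ccw_at \<sigma> p) + of_bool (ccw_at \<sigma> (column_partner lam i p)) :: int)"
proof -
  obtain u v s where uvs: "p = (u, v, s)" and "u < v" "1 \<le> s" and vs: "(v, s) \<in> dg lam" and "(u, s) \<in> dg lam"
    using p(1) by (auto simp: triple_positions_def)
  consider "u \<noteq> i" "u \<noteq> i + 1" "v \<noteq> i" "v \<noteq> i + 1" | "u = i" "v = i + 1"
    | "u < i" "v = i" "(i + 1, s) \<in> dg lam" | "u < i" "v = i" "(i + 1, s) \<notin> dg lam"
    | "u < i" "v = i + 1" | "u = i" "i + 1 < v" | "u = i + 1" "i + 1 < v"
    using \<open>u < v\<close> by linarith
  then show ?thesis
  proof cases
    case 1
    then show ?thesis
      using ccw_at_swap_cols_fixed[of u i v s r k \<sigma>] by (simp add: uvs del: ccw_at.simps)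
  next
    case 2
    then show ?thesis
      using ccw_at_swap_cols_columns[of s] p uvs \<open>(u, s) \<in> dg lam\<close> vs by (auto simp: triple_positions_def)
  next
    case 3
    then show ?thesis
      using ccw_at_swap_cols_left_pair[of u i \<sigma> r k s] \<open>1 \<le> s\<close> \<open>(u, s) \<in> dg lam\<close>
      by (simp add: uvs triple_positions_def)
  next
    case 4
    moreover have "k < s"
      using 4 run dg_row_mono[of "i + 1" k lam s] \<open>1 \<le> s\<close> by (force simp: flip_run_def)
    ultimately show ?thesis
      using ccw_at_swap_cols_fixed[of u i v s r k \<sigma>] by (simp add: uvs triple_positions_def del: ccw_at.simps)
  next
    case 5
    moreover have "(i, s) \<in> dg lam"
      using 5 dg_col_mono[OF part vs] \<open>1 \<le> i\<close> by simp
    ultimately show ?thesis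
      using ccw_at_swap_cols_left_pair[of u i \<sigma> r k s] \<open>1 \<le> s\<close> \<open>(u, s) \<in> dg lam\<close>
      by (simp add: uvs triple_positions_def)
  next
    case 6
    moreover have "(i + 1, s) \<in> dg lam"
      using 6 dg_col_mono[OF part vs] by simp
    ultimately show ?thesis
      using ccw_at_swap_cols_right_pair[of v s] \<open>1 \<le> s\<close> \<open>(u, s) \<in> dg lam\<close> vs
      by (simp add: uvs triple_positions_def)
  next
    case 7
    moreover have "(i, s) \<in> dg lam"
      using 7 dg_col_mono[OF part vs] \<open>1 \<le> i\<close> by simp
    ultimately show ?thesis
      using ccw_at_swap_cols_right_pair[of v s] \<open>1 \<le> s\<close> \<open>(u, s) \<in> dg lam\<close> vs
      by (simp add: uvs triple_positions_def)
  qed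
qed

end

theorem mainTheorem3:
  fixes lam :: "nat list" and \<sigma> :: "nat \<times> nat \<Rightarrow> nat" and i r :: nat
  assumes "is_partition lam"
    and "is_filling lam \<sigma>"
    and "(i, r) \<in> dg lam" and "(i + 1, r) \<in> dg lam"
    and "\<sigma> (i, r) \<noteq> \<sigma> (i + 1, r)"
    and "\<forall>s. 1 \<le> s \<and> s \<le> r - 1 \<longrightarrow> \<sigma> (i, s) = \<sigma> (i + 1, s)"
  shows "int (inv lam (T_op lam i r \<sigma>)) =
           (if ccw (val \<sigma> (i + 1, r)) (val \<sigma> (i, r)) (val \<sigma> (i, r - 1))
            then int (inv lam \<sigma>) - 1 else int (inv lam \<sigma>) + 1)"
proof -
  have "1 \<le> i" "1 \<le> r"
    using assms(3) by (auto simp: dg_def)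
  then obtain k where run: "flip_run lam \<sigma> i r k" and T: "T_op lam i r \<sigma> = \<sigma> \<circ> swap_cols i r k"
    using T_op_swap_cols assms(4) by blast
  have equal_below: "\<forall>s<r. val \<sigma> (i, s) = val \<sigma> (i + 1, s)"
    using assms(6) by (auto simp: val_def)
  have p\<^sub>0: "(i, i + 1, r) \<in> triple_positions lam"
    using assms(3,4) \<open>1 \<le> r\<close> by (simp add: triple_positions_def)
  have partner_p\<^sub>0: "column_partner lam i (i, i + 1, r) = (i, i + 1, r)"
    by (simp add: triple_positions_def)
  have "int (inv lam (T_op lam i r \<sigma>)) = int (inv lam \<sigma>)
      + (of_bool (ccw_at (\<sigma> \<circ> swap_cols i r k) (i, i + 1, r)) - of_bool (ccw_at \<sigma> (i, i + 1, r)))"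
    unfolding T inv_eq_sum
    by (rule sum_eq_by_involution[where g = "\<lambda>p. of_bool (ccw_at (\<sigma> \<circ> swap_cols i r k) p)"
          and f = "\<lambda>p. of_bool (ccw_at \<sigma> p)", OF finite_triple_positions bij_betw_column_partner
          p\<^sub>0 partner_p\<^sub>0 ccw_at_swap_cols_partner[OF run equal_below assms(1) \<open>1 \<le> i\<close>]])
  moreover have "ccw_at (\<sigma> \<circ> swap_cols i r k) (i, i + 1, r) \<longleftrightarrow> \<not> ccw_at \<sigma> (i, i + 1, r)"
  proof -
    have "val \<sigma> (i + 1, r) \<noteq> val \<sigma> (i, r)"
      using assms(5) \<open>1 \<le> r\<close> by (auto simp: val_def)
    from ccw_swap[OF this, of "val \<sigma> (i, r - 1)"] show ?thesis
      using run \<open>1 \<le> r\<close> by (auto simp: val_comp_swap_cols flip_run_def)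
  qed
  ultimately show ?thesis
    by simp
qed

end
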